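(* Let $n\in\mathbb N$ and let $y,z\in B_n$ with $\pi_z<\pi_y$ and $y\not\sim z$. Let $\psi_1^{(n)}$ be the nonnegative principal Dirichlet eigenvector in $B_n$ with $\|\psi_1^{(n)}\|_2=1$, and let $m_y=2\max_{x\sim y}\psi_1^{(n)}(x)$. Then $$\psi_1^{(n)}(y)\le\frac{m_y}{1-\pi_z/\pi_y}.$$
   Context: Lattice $\mathbb Z^d$, $d\ge2$, $x\sim y$ iff $|x-y|_1=1$, with positive conductances $w_{xy}=w_{yx}$ on nearest-neighbour edges. $B_n=[-n,n]^d\cap\mathbb Z^d$, $\pi_x=\sum_{y\sim x}w_{xy}$. $\mathcal E^{\boldsymbol w}(f)=\frac12\sum_x\sum_{y\sim x}w_{xy}(f(x)-f(y))^2$. The principal Dirichlet eigenvalue $\lambda_1^{(n)}=\inf\{\mathcal E^{\boldsymbol w}(f):\mathrm{supp}\,f\subseteq B_n,\|f\|_2=1\}$ is simple (Perron–Frobenius) and $\psi_1^{(n)}$ is the corresponding minimizer, supported in $B_n$, chosen nonnegative with $\|\psi_1^{(n)}\|_2=1$. *)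

theory Defs
  imports "HOL-Analysis.Analysis"
begin

text \<open>Points of Z^d are vectors int^'d; the dimension d is CARD('d).\<close>

definition l1dist :: "int ^ 'd \<Rightarrow> int ^ 'd \<Rightarrow> int" where
  "l1dist x y = (\<Sum>i\<in>UNIV. \<bar>x $ i - y $ i\<bar>)"

definition adj :: "int ^ 'd \<Rightarrow> int ^ 'd \<Rightarrow> bool" where
  "adj x y \<longleftrightarrow> l1dist x y = 1"

definition box :: "nat \<Rightarrow> (int ^ 'd) set" where
  "box n = {x. \<forall>i. \<bar>x $ i\<bar> \<le> int n}"

definition conductances :: "(int ^ 'd \<Rightarrow> int ^ 'd \<Rightarrow> real) \<Rightarrow> bool" where
  "conductances w \<longleftrightarrow> (\<forall>x y. adj x y \<longrightarrow> w x y > 0 \<and> w x y = w y x)"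

definition pi_w :: "(int ^ 'd \<Rightarrow> int ^ 'd \<Rightarrow> real) \<Rightarrow> int ^ 'd \<Rightarrow> real" where
  "pi_w w x = (\<Sum>y\<in>{y. adj x y}. w x y)"

definition energy :: "(int ^ 'd \<Rightarrow> int ^ 'd \<Rightarrow> real) \<Rightarrow> (int ^ 'd \<Rightarrow> real) \<Rightarrow> real" where
  "energy w f = (1/2) * (\<Sum>\<^sub>\<infinity>(x, y)\<in>{(x, y). adj x y}. w x y * (f x - f y)^2)"

definition l2sq :: "(int ^ 'd \<Rightarrow> real) \<Rightarrow> real" where
  "l2sq f = (\<Sum>\<^sub>\<infinity>x\<in>UNIV. (f x)^2)"

definition dirichlet_eig1 :: "(int ^ 'd \<Rightarrow> int ^ 'd \<Rightarrow> real) \<Rightarrow> nat \<Rightarrow> real" where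
  "dirichlet_eig1 w n = Inf {energy w f | f. {x. f x \<noteq> 0} \<subseteq> box n \<and> l2sq f = 1}"

definition principal_eigvec :: "(int ^ 'd \<Rightarrow> int ^ 'd \<Rightarrow> real) \<Rightarrow> nat \<Rightarrow> (int ^ 'd \<Rightarrow> real) \<Rightarrow> bool" where
  "principal_eigvec w n psi \<longleftrightarrow> {x. psi x \<noteq> 0} \<subseteq> box n \<and> l2sq psi = 1 \<and>
     (\<forall>x. psi x \<ge> 0) \<and> energy w psi = dirichlet_eig1 w n"

end

theory Submission imports Defs begin

text \<open>
  Test the variational characterisation of the principal eigenvalue \<open>\<lambda>\<close> with two functions.
  The indicator of \<open>z\<close> has energy \<open>\<pi>\<^sub>z\<close>, so \<open>\<lambda> \<le> \<pi>\<^sub>z\<close>.  Setting \<open>\<psi>\<close> to zero at \<open>y\<close> lowers the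
  squared norm by \<open>\<psi>(y)\<^sup>2\<close> and changes the energy by \<open>2\<psi>(y) \<Sum>\<^sub>x\<^sub>\<sim>\<^sub>y w\<^sub>x\<^sub>y \<psi>(x) - \<psi>(y)\<^sup>2 \<pi>\<^sub>y\<close>,
  which yields \<open>\<psi>(y) (\<pi>\<^sub>y - \<lambda>) \<le> 2 \<Sum>\<^sub>x\<^sub>\<sim>\<^sub>y w\<^sub>x\<^sub>y \<psi>(x) \<le> \<pi>\<^sub>y m\<^sub>y\<close>.
\<close>

lemma adj_commute: "adj x y \<longleftrightarrow> adj y x"
  unfolding adj_def l1dist_def by (simp add: abs_minus_commute)

lemma adj_irrefl: "\<not> adj x x"
  unfolding adj_def l1dist_def by simp

lemma finite_box: "finite (box n :: (int ^ 'd) set)"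
proof -
  let ?cube = "vec_lambda ` PiE (UNIV :: 'd set) (\<lambda>_. {-int n..int n})"
  have "box n \<subseteq> ?cube"
  proof
    fix x :: "int ^ 'd"
    assume "x \<in> box n"
    then have "\<bar>x $ i\<bar> \<le> int n" for i
      by (simp add: box_def)
    then have "x $ i \<in> {-int n..int n}" for i
      by (metis abs_le_D1 abs_le_D2 atLeastAtMost_iff minus_le_iff)
    then have "(\<lambda>i. x $ i) \<in> PiE UNIV (\<lambda>_. {-int n..int n})"
      by (simp add: PiE_iff)
    then show "x \<in> ?cube"
      by (metis vec_lambda_eta image_eqI)
  qed
  then show ?thesis
    by (rule finite_subset) (simp add: finite_PiE)
qed

lemma box_subset_box_Suc: "box n \<subseteq> box (Suc n)"
  unfolding box_def by (auto intro: order_trans)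

lemma adj_box_Suc:
  assumes "adj x y" "y \<in> box n"
  shows "x \<in> box (Suc n)"
proof -
  have "\<bar>x $ i\<bar> \<le> int (Suc n)" for i
  proof -
    have "\<bar>x $ i - y $ i\<bar> \<le> 1"
      using member_le_sum[of i UNIV "\<lambda>j. \<bar>x $ j - y $ j\<bar>"] assms(1)
      by (simp add: adj_def l1dist_def)
    moreover have "\<bar>y $ i\<bar> \<le> int n"
      using assms(2) by (simp add: box_def)
    moreover have "\<bar>x $ i\<bar> \<le> \<bar>x $ i - y $ i\<bar> + \<bar>y $ i\<bar>"
      using abs_triangle_ineq[of "x $ i - y $ i" "y $ i"] by simp
    ultimately show ?thesis
      by simp
  qed
  then show ?thesis
    by (simp add: box_def)
qed

lemma finite_adj: "finite {y. adj x y}"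
proof -
  have "\<bar>x $ i\<bar> \<le> (\<Sum>j\<in>UNIV. \<bar>x $ j\<bar>)" for i
    by (rule member_le_sum) auto
  then have "x \<in> box (nat (\<Sum>j\<in>UNIV. \<bar>x $ j\<bar>))"
    by (simp add: box_def)
  then have "{y. adj x y} \<subseteq> box (Suc (nat (\<Sum>j\<in>UNIV. \<bar>x $ j\<bar>)))"
    using adj_box_Suc adj_commute by blast
  then show ?thesis
    using finite_box finite_subset by blast
qed

text \<open>Every edge meeting \<open>box n\<close> lies in \<open>box (Suc n)\<close>, so for functions supported in \<open>box n\<close>
  the energy is a finite sum over these edges.\<close>

definition box_edges :: "nat \<Rightarrow> ((int ^ 'd) \<times> (int ^ 'd)) set" where
  "box_edges n = {(a, b). adj a b \<and> a \<in> box (Suc n) \<and> b \<in> box (Suc n)}"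

lemma finite_box_edges: "finite (box_edges n)"
  by (rule finite_subset[of _ "box (Suc n) \<times> box (Suc n)"])
     (auto simp: box_edges_def finite_box)

lemma energy_eq_sum_box_edges:
  fixes f :: "int ^ 'd \<Rightarrow> real"
  assumes "{x. f x \<noteq> 0} \<subseteq> box n"
  shows "energy w f = (1/2) * (\<Sum>(a, b)\<in>box_edges n. w a b * (f a - f b)^2)"
proof -
  have "(\<Sum>\<^sub>\<infinity>(a, b)\<in>{(a, b). adj a b}. w a b * (f a - f b)^2)
      = (\<Sum>\<^sub>\<infinity>(a, b)\<in>box_edges n. w a b * (f a - f b)^2)"
  proof (rule infsum_cong_neutral)
    fix p :: "(int ^ 'd) \<times> (int ^ 'd)"
    assume p: "p \<in> {(a, b). adj a b} - box_edges n"
    obtain a b where ab: "p = (a, b)" by fastforce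
    with p have "a \<notin> box n" "b \<notin> box n"
      using adj_box_Suc adj_commute box_subset_box_Suc by (fastforce simp: box_edges_def)+
    then have "f a = 0" "f b = 0"
      using assms by auto
    with ab show "(case p of (a, b) \<Rightarrow> w a b * (f a - f b)^2) = 0"
      by auto
  qed (auto simp: box_edges_def)
  then show ?thesis
    by (simp add: energy_def finite_box_edges)
qed

lemma l2sq_eq_sum_box:
  assumes "{x. f x \<noteq> 0} \<subseteq> box n"
  shows "l2sq f = (\<Sum>x\<in>box n. (f x)^2)"
proof -
  have "l2sq f = (\<Sum>\<^sub>\<infinity>x\<in>box n. (f x)^2)"
    unfolding l2sq_def by (rule infsum_cong_neutral) (use assms in auto)
  then show ?thesis
    by (simp add: finite_box)
qed

lemma conductances_nonneg: "conductances w \<Longrightarrow> adj x y \<Longrightarrow> w x y \<ge> 0"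
  unfolding conductances_def by (simp add: less_imp_le)

lemma pi_w_nonneg: "conductances w \<Longrightarrow> pi_w w x \<ge> 0"
  unfolding pi_w_def by (auto intro: sum_nonneg conductances_nonneg)

lemma energy_nonneg: "conductances w \<Longrightarrow> energy w f \<ge> 0"
  unfolding energy_def conductances_def
  by (intro mult_nonneg_nonneg infsum_nonneg) (auto simp: less_imp_le)

lemma l2sq_nonneg: "l2sq f \<ge> 0"
  unfolding l2sq_def by (rule infsum_nonneg) simp

lemma energy_scale: "energy w (\<lambda>x. c * f x) = c^2 * energy w f"
proof -
  have "(\<lambda>(a, b). w a b * (c * f a - c * f b)^2) = (\<lambda>p. c^2 * (case p of (a, b) \<Rightarrow> w a b * (f a - f b)^2))"
    by (auto simp: power2_eq_square algebra_simps)
  then show ?thesis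
    by (simp add: energy_def infsum_cmult_right')
qed

lemma l2sq_scale: "l2sq (\<lambda>x. c * f x) = c^2 * l2sq f"
  by (simp add: l2sq_def power_mult_distrib infsum_cmult_right')

lemma dirichlet_eig1_mult_l2sq_le_energy:
  assumes "conductances w" "{x. f x \<noteq> 0} \<subseteq> box n"
  shows "dirichlet_eig1 w n * l2sq f \<le> energy w f"
proof (cases "l2sq f = 0")
  case True
  then show ?thesis using energy_nonneg[OF assms(1)] by simp
next
  case False
  then have pos: "l2sq f > 0" using l2sq_nonneg[of f] by simp
  define c where "c = 1 / sqrt (l2sq f)"
  have c2: "c^2 = 1 / l2sq f"
    using pos by (simp add: c_def power_divide)
  have "dirichlet_eig1 w n \<le> energy w (\<lambda>x. c * f x)"
    unfolding dirichlet_eig1_def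
  proof (rule cInf_lower)
    show "energy w (\<lambda>x. c * f x) \<in> {energy w g | g. {x. g x \<noteq> 0} \<subseteq> box n \<and> l2sq g = 1}"
      using assms(2) pos by (auto simp: l2sq_scale c2 intro!: exI[of _ "\<lambda>x. c * f x"])
    show "bdd_below {energy w g | g. {x. g x \<noteq> 0} \<subseteq> box n \<and> l2sq g = 1}"
      using energy_nonneg[OF assms(1)] by (auto intro!: bdd_belowI[where m = 0])
  qed
  then have "dirichlet_eig1 w n \<le> energy w f / l2sq f"
    by (simp add: energy_scale c2)
  then show ?thesis
    using pos by (simp add: field_simps)
qed

lemma sum_box_edges_at_vertex:
  assumes "c \<in> box n"
  shows "(\<Sum>(a, b)\<in>box_edges n. if a = c then h b else 0) = (\<Sum>b\<in>{b. adj c b}. h b :: real)"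
proof -
  have edges_at_c: "box_edges n \<inter> {p. fst p = c} = Pair c ` {b. adj c b}"
    using assms adj_box_Suc adj_commute box_subset_box_Suc by (fastforce simp: box_edges_def)
  have "(\<Sum>(a, b)\<in>box_edges n. if a = c then h b else 0)
      = (\<Sum>p\<in>box_edges n \<inter> {p. fst p = c}. h (snd p))"
    by (simp add: sum.inter_restrict finite_box_edges case_prod_beta if_distrib cong: if_cong)
  also have "\<dots> = (\<Sum>b\<in>{b. adj c b}. h b)"
    by (simp add: edges_at_c sum.reindex inj_on_def)
  finally show ?thesis .
qed

lemma sum_box_edges_swap:
  "(\<Sum>(a, b)\<in>box_edges n. F a b) = (\<Sum>(a, b)\<in>box_edges n. F b a :: real)"
  by (rule sum.reindex_bij_witness[where i = prod.swap and j = prod.swap])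
     (auto simp: box_edges_def adj_commute)

lemma energy_fun_upd:
  assumes "conductances w" "{x. f x \<noteq> 0} \<subseteq> box n" "c \<in> box n"
  shows "energy w (f(c := t))
    = energy w f + (\<Sum>b\<in>{b. adj c b}. w c b * ((t - f b)^2 - (f c - f b)^2))"
proof -
  define g where "g = f(c := t)"
  define D where "D b = w c b * ((t - f b)^2 - (f c - f b)^2)" for b
  have supp: "{x. g x \<noteq> 0} \<subseteq> box n"
    using assms(2,3) by (auto simp: g_def)
  have edge: "w a b * (g a - g b)^2
      = w a b * (f a - f b)^2 + ((if a = c then D b else 0) + (if b = c then D a else 0))"
    if "(a, b) \<in> box_edges n" for a b
  proof -
    have "adj a b" using that by (simp add: box_edges_def)
    then have "a \<noteq> b" "w a b = w b a"
      using adj_irrefl assms(1) by (auto simp: conductances_def)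
    then show ?thesis
      by (auto simp: g_def D_def power2_commute) (simp_all add: algebra_simps)
  qed
  have "(\<Sum>(a, b)\<in>box_edges n. w a b * (g a - g b)^2)
      = (\<Sum>(a, b)\<in>box_edges n. w a b * (f a - f b)^2 +
          ((if a = c then D b else 0) + (if b = c then D a else 0)))"
    by (intro sum.cong refl) (auto simp: edge)
  also have "\<dots> = (\<Sum>(a, b)\<in>box_edges n. w a b * (f a - f b)^2) +
      ((\<Sum>(a, b)\<in>box_edges n. if a = c then D b else 0) +
       (\<Sum>(a, b)\<in>box_edges n. if b = c then D a else 0))"
    by (simp add: sum.distrib case_prod_unfold)
  also have "\<dots> = (\<Sum>(a, b)\<in>box_edges n. w a b * (f a - f b)^2) + 2 * (\<Sum>b\<in>{b. adj c b}. D b)"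
    using sum_box_edges_swap[of "\<lambda>a b. if b = c then D a else 0" n]
      sum_box_edges_at_vertex[OF assms(3), of D] by simp
  finally show ?thesis
    unfolding g_def[symmetric] energy_eq_sum_box_edges[OF supp] energy_eq_sum_box_edges[OF assms(2)]
    by (simp add: D_def)
qed

lemma l2sq_fun_upd:
  assumes "{x. f x \<noteq> 0} \<subseteq> box n" "c \<in> box n"
  shows "l2sq (f(c := t)) = l2sq f - (f c)^2 + t^2"
proof -
  have "{x. (f(c := t)) x \<noteq> 0} \<subseteq> box n"
    using assms by auto
  then show ?thesis
    using assms sum.remove[OF finite_box assms(2), of "\<lambda>x. ((f(c := t)) x)^2"]
      sum.remove[OF finite_box assms(2), of "\<lambda>x. (f x)^2"]
    by (simp add: l2sq_eq_sum_box)
qed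

lemma dirichlet_eig1_le_pi_w:
  assumes "conductances w" "z \<in> box n"
  shows "dirichlet_eig1 w n \<le> pi_w w z"
proof -
  let ?\<delta> = "(\<lambda>_. 0 :: real)(z := 1)"
  have "energy w (\<lambda>_. 0) = 0"
    using energy_eq_sum_box_edges[of "\<lambda>_. 0" n w] by simp
  then have "energy w ?\<delta> = pi_w w z"
    using energy_fun_upd[OF assms(1) _ assms(2), of "\<lambda>_. 0" 1] by (simp add: pi_w_def)
  moreover have "l2sq ?\<delta> = 1"
    using l2sq_fun_upd[OF _ assms(2), of "\<lambda>_. 0" 1] by (simp add: l2sq_def)
  ultimately show ?thesis
    using dirichlet_eig1_mult_l2sq_le_energy[OF assms(1), of ?\<delta> n] assms(2) by simp
qed

lemma principal_eigvec_le_neighbour_sum: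
  assumes "conductances w" "principal_eigvec w n psi" "y \<in> box n"
  shows "psi y * (pi_w w y - dirichlet_eig1 w n) \<le> 2 * (\<Sum>b\<in>{b. adj y b}. w y b * psi b)"
proof -
  define lam where "lam = dirichlet_eig1 w n"
  define S where "S = (\<Sum>b\<in>{b. adj y b}. w y b * psi b)"
  have supp: "{x. psi x \<noteq> 0} \<subseteq> box n" and "l2sq psi = 1" and psi_energy: "energy w psi = lam"
    and psi_nonneg: "\<And>x. psi x \<ge> 0"
    using assms(2) by (auto simp: principal_eigvec_def lam_def)
  have "(\<Sum>b\<in>{b. adj y b}. w y b * ((0 - psi b)^2 - (psi y - psi b)^2))
      = 2 * psi y * S - (psi y)^2 * pi_w w y"
    by (simp add: S_def pi_w_def power2_eq_square algebra_simps sum_subtractf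
        sum_distrib_left sum_distrib_right)
  then have "lam * (1 - (psi y)^2) \<le> lam + (2 * psi y * S - (psi y)^2 * pi_w w y)"
    using dirichlet_eig1_mult_l2sq_le_energy[OF assms(1), of "psi(y := 0)" n] supp assms(3)
      energy_fun_upd[OF assms(1) supp assms(3), of 0] l2sq_fun_upd[OF supp assms(3), of 0]
      \<open>l2sq psi = 1\<close> psi_energy
    by (simp add: lam_def subset_iff)
  then have "psi y * (psi y * (pi_w w y - lam)) \<le> psi y * (2 * S)"
    by (simp add: power2_eq_square algebra_simps)
  moreover have "S \<ge> 0"
    unfolding S_def using assms(1) psi_nonneg
    by (intro sum_nonneg mult_nonneg_nonneg) (auto intro: conductances_nonneg)
  ultimately show ?thesis
    using psi_nonneg[of y] unfolding lam_def S_def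
    by (cases "psi y = 0") (auto simp: mult_le_cancel_left)
qed

lemma sum_adj_weighted_le_pi_w_Max:
  assumes "conductances w"
  shows "(\<Sum>b\<in>{b. adj y b}. w y b * f b) \<le> pi_w w y * Max (f ` {x. adj x y})"
proof -
  have "f b \<le> Max (f ` {x. adj x y})" if "adj y b" for b
    using that finite_adj[of y] adj_commute by (auto intro!: Max_ge)
  then show ?thesis
    unfolding pi_w_def sum_distrib_right using assms
    by (intro sum_mono) (auto intro: mult_left_mono conductances_nonneg)
qed

theorem lemma5p5:
  fixes w :: "int ^ 'd \<Rightarrow> int ^ 'd \<Rightarrow> real" and n :: nat
    and y z :: "int ^ 'd" and psi :: "int ^ 'd \<Rightarrow> real"
  assumes "CARD('d) \<ge> 2"
    and "conductances w"
    and "principal_eigvec w n psi"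
    and "y \<in> box n" and "z \<in> box n"
    and "pi_w w z < pi_w w y"
    and "\<not> adj y z"
  shows "psi y \<le> (2 * Max (psi ` {x. adj x y})) / (1 - pi_w w z / pi_w w y)"
proof -
  from pi_w_nonneg[OF assms(2), of z] assms(6) have pi_y: "pi_w w y > 0" by linarith
  have "psi y * (pi_w w y - pi_w w z) \<le> psi y * (pi_w w y - dirichlet_eig1 w n)"
    using dirichlet_eig1_le_pi_w[OF assms(2,5)] assms(3)
    by (intro mult_left_mono) (auto simp: principal_eigvec_def)
  also have "\<dots> \<le> 2 * (\<Sum>b\<in>{b. adj y b}. w y b * psi b)"
    by (rule principal_eigvec_le_neighbour_sum[OF assms(2,3,4)])
  also have "\<dots> \<le> 2 * Max (psi ` {x. adj x y}) * pi_w w y"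
    using sum_adj_weighted_le_pi_w_Max[OF assms(2), of y psi] by (simp add: mult_ac)
  finally show ?thesis
    using pi_y assms(6) by (simp add: field_simps)
qed

end
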